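(* Let $A^1,\ldots,A^M\in\mathbb{R}^{m,n}$ be matrices whose columns have Euclidean norm $1$. If \[ M-2\sum_{1\le i<j\le M}\mathcal{M}_D(A^i,A^j)>0, \] then \[ \mathcal{M}\Bigl(\sum_{i=1}^M A^i\Bigr)\le\frac{\sum_{i=1}^M\mathcal{M}(A^i)+2\sum_{1\le i<j\le M}\mathcal{M}_{OD}(A^i,A^j)}{M-2\sum_{1\le i<j\le M}\mathcal{M}_D(A^i,A^j)}. \]
   Context: For $C=[c_1,\ldots,c_n]$ with columns of norm $1$, $\mathcal{M}(C)=\max_{i\ne j}|\langle c_i,c_j\rangle|$. For a matrix $C=[c_1,\ldots,c_n]$ with nonzero but not necessarily normalized columns (such as $\sum_i A^i$), $\mathcal{M}(C)$ means $\max_{i\ne j}\frac{|\langle c_i,c_j\rangle|}{\|c_i\|_2\|c_j\|_2}$. For $A=[a_1,\ldots,a_n]$, $B=[b_1,\ldots,b_n]$ with normalized columns, $\mathcal{M}_{OD}(A,B)=\max_{i\ne j}|\langle a_i,b_j\rangle|$ and $\mathcal{M}_D(A,B)=\max_i|\langle a_i,b_i\rangle|$. *)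

theory Defs
  imports "HOL-Analysis.Analysis"
begin

text \<open>Matrices in R^{m x n} are represented as real^'n^'m; the j-th column is column j A.
  Maxima over pairs i ~= j are taken together with 0 (harmless since all values are
  absolute values, and this makes the notions total when n = 1).\<close>

definition mutual_coherence :: "real^'n^'m \<Rightarrow> real" where
  "mutual_coherence C = Max (insert 0
     {\<bar>column i C \<bullet> column j C\<bar> / (norm (column i C) * norm (column j C)) | i j. i \<noteq> j})"

definition coherence_OD :: "real^'n^'m \<Rightarrow> real^'n^'m \<Rightarrow> real" where
  "coherence_OD A B = Max (insert 0 {\<bar>column i A \<bullet> column j B\<bar> | i j. i \<noteq> j})"

definition coherence_D :: "real^'n^'m \<Rightarrow> real^'n^'m \<Rightarrow> real" where
  "coherence_D A B = Max (insert 0 {\<bar>column i A \<bullet> column i B\<bar> | i. True})"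

end

theory Submission
  imports Defs
begin

text \<open>Write \<open>c\<^sub>p\<close> for the columns of \<open>C = A\<^sup>1 + \<dots> + A\<^sup>M\<close> and \<open>a\<^sup>i\<^sub>p\<close> for those of \<open>A\<^sup>i\<close>.
  Splitting \<open>c\<^sub>p \<bullet> c\<^sub>q\<close> into the diagonal terms \<open>a\<^sup>i\<^sub>p \<bullet> a\<^sup>i\<^sub>q\<close> and the cross terms
  \<open>a\<^sup>i\<^sub>p \<bullet> a\<^sup>j\<^sub>q + a\<^sup>j\<^sub>p \<bullet> a\<^sup>i\<^sub>q\<close> (\<open>i < j\<close>) bounds \<open>\<bar>c\<^sub>p \<bullet> c\<^sub>q\<bar>\<close> by the numerator when
  \<open>p \<noteq> q\<close>. For \<open>p = q\<close> the diagonal terms sum to \<open>M\<close> and each cross term is at least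
  \<open>-2 coherence_D A\<^sup>i A\<^sup>j\<close>, so \<open>\<parallel>c\<^sub>p\<parallel>\<^sup>2\<close> is at least the denominator \<open>D > 0\<close>. Hence
  \<open>\<parallel>c\<^sub>p\<parallel> \<parallel>c\<^sub>q\<parallel> \<ge> D\<close> and every normalized inner product is at most the ratio.\<close>

lemma sum_sum_diag_upper:
  fixes f :: "nat \<Rightarrow> nat \<Rightarrow> 'a::comm_monoid_add"
  shows "(\<Sum>i\<in>{1..M}. \<Sum>j\<in>{1..M}. f i j)
    = (\<Sum>i\<in>{1..M}. f i i) + (\<Sum>i\<in>{1..M}. \<Sum>j\<in>{i<..M}. f i j + f j i)"
proof (induction M)
  case 0
  then show ?case by simp
next
  case (Suc M)
  have range_Suc: "{1..Suc M} = insert (Suc M) {1..M}" by auto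
  have upper_Suc: "{i<..Suc M} = insert (Suc M) {i<..M}" if "i \<in> {1..M}" for i
    using that by auto
  have "(\<Sum>i\<in>{1..Suc M}. \<Sum>j\<in>{1..Suc M}. f i j)
     = (\<Sum>i\<in>{1..M}. \<Sum>j\<in>{1..M}. f i j)
       + ((\<Sum>i\<in>{1..M}. f i (Suc M) + f (Suc M) i) + f (Suc M) (Suc M))"
    by (simp add: range_Suc sum.distrib add.assoc add.left_commute)
  also have "\<dots> = (\<Sum>i\<in>{1..M}. f i i) + (\<Sum>i\<in>{1..M}. \<Sum>j\<in>{i<..M}. f i j + f j i)
       + ((\<Sum>i\<in>{1..M}. f i (Suc M) + f (Suc M) i) + f (Suc M) (Suc M))"
    by (simp only: Suc.IH)
  also have "\<dots> = (\<Sum>i\<in>{1..Suc M}. f i i)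
       + (\<Sum>i\<in>{1..M}. (f i (Suc M) + f (Suc M) i) + (\<Sum>j\<in>{i<..M}. f i j + f j i))"
    by (simp add: range_Suc sum.distrib ac_simps)
  also have "(\<Sum>i\<in>{1..M}. (f i (Suc M) + f (Suc M) i) + (\<Sum>j\<in>{i<..M}. f i j + f j i))
      = (\<Sum>i\<in>{1..Suc M}. \<Sum>j\<in>{i<..Suc M}. f i j + f j i)"
    by (simp add: range_Suc, rule sum.cong) (simp_all add: upper_Suc)
  finally show ?case .
qed

lemma inner_sum_diag_upper:
  fixes x y :: "nat \<Rightarrow> 'a::real_inner"
  shows "(\<Sum>i\<in>{1..M}. x i) \<bullet> (\<Sum>j\<in>{1..M}. y j)
    = (\<Sum>i\<in>{1..M}. x i \<bullet> y i) + (\<Sum>i\<in>{1..M}. \<Sum>j\<in>{i<..M}. x i \<bullet> y j + x j \<bullet> y i)"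
  unfolding inner_sum_left inner_sum_right by (subst sum.swap) (rule sum_sum_diag_upper)

lemma column_sum: "column j (sum A S) = (\<Sum>k\<in>S. column j (A k))"
  by (simp add: column_def vec_eq_iff)

lemma finite_setcompr_pairs:
  fixes f :: "'n::finite \<Rightarrow> 'n \<Rightarrow> 'a"
  shows "finite {f i j | i j. P i j}"
  by (rule finite_subset[of _ "case_prod f ` UNIV"]) auto

lemma le_Max_insert_0:
  fixes x :: real
  assumes "finite S" "x \<in> S"
  shows "x \<le> Max (insert 0 S)"
  using assms by (simp add: Max_ge_iff)

lemma mutual_coherence_nonneg: "0 \<le> mutual_coherence C"
  unfolding mutual_coherence_def by (simp add: finite_setcompr_pairs)

lemma coherence_OD_nonneg: "0 \<le> coherence_OD A B"
  unfolding coherence_OD_def by (simp add: finite_setcompr_pairs)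

lemma abs_inner_le_mutual_coherence:
  assumes "norm (column p C) = 1" "norm (column q C) = 1" "p \<noteq> q"
  shows "\<bar>column p C \<bullet> column q C\<bar> \<le> mutual_coherence C"
  unfolding mutual_coherence_def
  by (rule le_Max_insert_0[OF finite_setcompr_pairs]) (use assms in force)

lemma abs_inner_le_coherence_OD:
  assumes "p \<noteq> q"
  shows "\<bar>column p A \<bullet> column q B\<bar> \<le> coherence_OD A B"
  unfolding coherence_OD_def
  by (rule le_Max_insert_0[OF finite_setcompr_pairs]) (use assms in blast)

lemma abs_inner_le_coherence_D: "\<bar>column p A \<bullet> column p B\<bar> \<le> coherence_D A B"
proof -
  have "finite {\<bar>column i A \<bullet> column i B\<bar> | i. True}"
    by (rule finite_subset[of _ "(\<lambda>i. \<bar>column i A \<bullet> column i B\<bar>) ` UNIV"]) auto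
  then show ?thesis
    unfolding coherence_D_def by (rule le_Max_insert_0) blast
qed

lemma mult_ge_if_squares_ge:
  fixes a b D :: real
  assumes "0 \<le> a" "0 \<le> b" "D \<le> a\<^sup>2" "D \<le> b\<^sup>2"
  shows "D \<le> a * b"
proof (cases "a \<le> b")
  case True
  have "a * a \<le> a * b" using True assms(1) by (rule mult_left_mono)
  then show ?thesis using assms(3) by (simp add: power2_eq_square)
next
  case False
  have "b * b \<le> a * b" using False assms(2) by (intro mult_right_mono) simp_all
  then show ?thesis using assms(4) by (simp add: power2_eq_square)
qed

lemma mutual_coherence_le_divide:
  assumes off_diag: "\<And>p q. p \<noteq> q \<Longrightarrow> \<bar>column p C \<bullet> column q C\<bar> \<le> N"
    and diag: "\<And>p. D \<le> (norm (column p C))\<^sup>2"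
    and "0 \<le> N" "0 < D"
  shows "mutual_coherence C \<le> N / D"
  unfolding mutual_coherence_def
proof (rule Max.boundedI)
  fix x
  assume "x \<in> insert 0 {\<bar>column i C \<bullet> column j C\<bar> / (norm (column i C) * norm (column j C)) | i j. i \<noteq> j}"
  then consider "x = 0"
    | p q where "p \<noteq> q" "x = \<bar>column p C \<bullet> column q C\<bar> / (norm (column p C) * norm (column q C))"
    by blast
  then show "x \<le> N / D"
  proof cases
    case 1
    then show ?thesis using assms by simp
  next
    case 2
    have "D \<le> norm (column p C) * norm (column q C)"
      by (rule mult_ge_if_squares_ge) (auto intro: diag)
    then show ?thesis
      unfolding 2(2) using assms off_diag[OF 2(1)] by (intro frac_le) auto
  qed
qed (auto simp: finite_setcompr_pairs)

context
  fixes A :: "nat \<Rightarrow> real^'n^'m" and M :: nat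
  assumes unit: "\<And>k j. k \<in> {1..M} \<Longrightarrow> norm (column j (A k)) = 1"
begin

lemma abs_inner_column_sum_le:
  assumes "p \<noteq> q"
  shows "\<bar>column p (\<Sum>k\<in>{1..M}. A k) \<bullet> column q (\<Sum>k\<in>{1..M}. A k)\<bar>
    \<le> (\<Sum>k\<in>{1..M}. mutual_coherence (A k))
       + 2 * (\<Sum>i\<in>{1..M}. \<Sum>j\<in>{i<..M}. coherence_OD (A i) (A j))"
proof -
  have diag: "\<bar>\<Sum>i\<in>{1..M}. column p (A i) \<bullet> column q (A i)\<bar> \<le> (\<Sum>k\<in>{1..M}. mutual_coherence (A k))"
    by (rule order_trans[OF sum_abs sum_mono])
      (use assms in \<open>auto intro!: abs_inner_le_mutual_coherence unit\<close>)
  have cross: "\<bar>column p (A i) \<bullet> column q (A j) + column p (A j) \<bullet> column q (A i)\<bar>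
      \<le> 2 * coherence_OD (A i) (A j)" for i j
    using abs_inner_le_coherence_OD[OF assms, of "A i" "A j"]
      abs_inner_le_coherence_OD[OF assms[symmetric], of "A i" "A j"]
    by (simp add: inner_commute)
  have "\<bar>\<Sum>i\<in>{1..M}. \<Sum>j\<in>{i<..M}. column p (A i) \<bullet> column q (A j) + column p (A j) \<bullet> column q (A i)\<bar>
      \<le> (\<Sum>i\<in>{1..M}. \<Sum>j\<in>{i<..M}. 2 * coherence_OD (A i) (A j))"
    by (intro order_trans[OF sum_abs sum_mono] order_trans[OF sum_abs sum_mono] cross)
  with diag show ?thesis
    unfolding column_sum inner_sum_diag_upper by (simp add: sum_distrib_left)
qed

lemma norm_column_sum_ge:
  "real M - 2 * (\<Sum>i\<in>{1..M}. \<Sum>j\<in>{i<..M}. coherence_D (A i) (A j))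
    \<le> (norm (column p (\<Sum>k\<in>{1..M}. A k)))\<^sup>2"
proof -
  have diag: "(\<Sum>i\<in>{1..M}. column p (A i) \<bullet> column p (A i)) = real M"
    using unit by (simp flip: power2_norm_eq_inner)
  have cross: "- 2 * coherence_D (A i) (A j) \<le> column p (A i) \<bullet> column p (A j) + column p (A j) \<bullet> column p (A i)"
    for i j
    using abs_inner_le_coherence_D[of p "A i" "A j"] by (simp add: inner_commute)
  have "(\<Sum>i\<in>{1..M}. \<Sum>j\<in>{i<..M}. - 2 * coherence_D (A i) (A j))
      \<le> (\<Sum>i\<in>{1..M}. \<Sum>j\<in>{i<..M}. column p (A i) \<bullet> column p (A j) + column p (A j) \<bullet> column p (A i))"
    by (intro sum_mono cross)
  with diag show ?thesis
    unfolding power2_norm_eq_inner column_sum inner_sum_diag_upper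
    by (simp add: sum_distrib_left sum_negf)
qed

end

theorem corollary4p6:
  fixes A :: "nat \<Rightarrow> real^'n^'m" and M :: nat
  assumes unit: "\<And>k j. k \<in> {1..M} \<Longrightarrow> norm (column j (A k)) = 1"
    and pos: "real M - 2 * (\<Sum>i\<in>{1..M}. \<Sum>j\<in>{i<..M}. coherence_D (A i) (A j)) > 0"
  shows "mutual_coherence (\<Sum>k\<in>{1..M}. A k)
    \<le> ((\<Sum>k\<in>{1..M}. mutual_coherence (A k))
          + 2 * (\<Sum>i\<in>{1..M}. \<Sum>j\<in>{i<..M}. coherence_OD (A i) (A j)))
       / (real M - 2 * (\<Sum>i\<in>{1..M}. \<Sum>j\<in>{i<..M}. coherence_D (A i) (A j)))"
proof (rule mutual_coherence_le_divide)
  show "0 \<le> (\<Sum>k\<in>{1..M}. mutual_coherence (A k))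
      + 2 * (\<Sum>i\<in>{1..M}. \<Sum>j\<in>{i<..M}. coherence_OD (A i) (A j))"
    by (intro add_nonneg_nonneg mult_nonneg_nonneg sum_nonneg
        mutual_coherence_nonneg coherence_OD_nonneg) simp
qed (use abs_inner_column_sum_le[OF unit] norm_column_sum_ge[OF unit] pos in auto)

end
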